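(* Let $u^1:S\times B\to\mathbb{R}$ and let $y:S\to\Delta(B)$ be a one-to-one map such that $U^1(\mu_0,y)\ge U^1(\mu,y)$ for every $\mu\in\mathcal{M}$. Then every neighborhood of $u^1$ in $\mathbb{R}^{S\times B}$ contains a function $\tilde u^1:S\times B\to\mathbb{R}$ such that $\tilde U^1(\mu_0,y)>\tilde U^1(\mu,y)$ for every $\mu\in\mathcal{M}$ with $\mu\neq\mu_0$, where $\tilde U^1$ is computed with $\tilde u^1$ in place of $u^1$.
   Context: $S$ and $B$ are finite sets; messages are identified with states. $m\in\Delta(S)$ has full support. $\mathcal{M}$ is the set of probability distributions on $S\times S$ both of whose marginals equal $m$; $\mu_0(s,s)=m(s)$, $\mu_0(s,t)=0$ for $s\ne t$. With $u^1$ extended linearly to mixed actions, $U^1(\mu,y)=\sum_{s,a\in S}\mu(s,a)u^1(s,y(\cdot\mid a))$. *)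

theory Defs
  imports "HOL-Analysis.Analysis"
begin

definition is_dist :: "('a::finite \<Rightarrow> real) \<Rightarrow> bool" where
  "is_dist p \<longleftrightarrow> (\<forall>x. 0 \<le> p x) \<and> (\<Sum>x\<in>UNIV. p x) = 1"

definition couplings :: "('a::finite \<Rightarrow> real) \<Rightarrow> ('a \<times> 'a \<Rightarrow> real) set" where
  "couplings m = {\<mu>. is_dist \<mu> \<and> (\<forall>s. (\<Sum>t\<in>UNIV. \<mu> (s,t)) = m s)
                           \<and> (\<forall>t. (\<Sum>s\<in>UNIV. \<mu> (s,t)) = m t)}"

definition mu0 :: "('a::finite \<Rightarrow> real) \<Rightarrow> ('a \<times> 'a \<Rightarrow> real)" where
  "mu0 m = (\<lambda>(s,t). if s = t then m s else 0)"

definition u_mixed :: "('a \<times> 'b::finite \<Rightarrow> real) \<Rightarrow> 'a \<Rightarrow> ('b \<Rightarrow> real) \<Rightarrow> real" where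
  "u_mixed u s \<sigma> = (\<Sum>b\<in>UNIV. \<sigma> b * u (s,b))"

definition U1 :: "('a::finite \<times> 'b::finite \<Rightarrow> real) \<Rightarrow> ('a \<times> 'a \<Rightarrow> real) \<Rightarrow> ('a \<Rightarrow> 'b \<Rightarrow> real) \<Rightarrow> real" where
  "U1 u \<mu> y = (\<Sum>s\<in>UNIV. \<Sum>a\<in>UNIV. \<mu> (s,a) * u_mixed u s (y a))"

end

theory Submission
  imports Defs
begin

text \<open>
  Perturb \<open>u\<close> in the direction of the utility \<open>v(s,b) = y(b|s)\<close>. For any coupling \<open>\<mu>\<close>,
  \<open>U(\<mu>,y)\<close> computed with \<open>v\<close> is \<open>\<Sum>\<^sub>s\<^sub>a \<mu>(s,a) \<langle>y s, y a\<rangle>\<close>; since both marginals are \<open>m\<close>, the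
  polarisation identity turns this into \<open>\<Sum>\<^sub>s m s |y s|\<^sup>2 - 1/2 \<Sum>\<^sub>s\<^sub>a \<mu>(s,a) |y s - y a|\<^sup>2\<close>.
  As \<open>y\<close> is injective, the last sum vanishes only when \<open>\<mu>\<close> lives on the diagonal, i.e.
  \<open>\<mu> = \<mu>\<^sub>0\<close>. So \<open>v\<close> strictly prefers \<open>\<mu>\<^sub>0\<close>, and \<open>u + \<epsilon> v\<close> does too for every \<open>\<epsilon> > 0\<close>,
  while it lies in any given neighbourhood of \<open>u\<close> for small \<open>\<epsilon>\<close>.
\<close>

definition agreement_utility :: "('a \<Rightarrow> 'b \<Rightarrow> real) \<Rightarrow> 'a \<times> 'b \<Rightarrow> real" where
  "agreement_utility y = (\<lambda>(s,b). y s b)"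

definition mismatch :: "('a \<times> 'a \<Rightarrow> real) \<Rightarrow> ('a \<Rightarrow> 'b::finite \<Rightarrow> real) \<Rightarrow> real" where
  "mismatch \<mu> y = (\<Sum>s\<in>UNIV. \<Sum>a\<in>UNIV. \<mu> (s,a) * (\<Sum>b\<in>UNIV. (y s b - y a b)\<^sup>2))"

lemma U1_add_scaled:
  "U1 (\<lambda>x. u x + e * v x) \<mu> y = U1 u \<mu> y + e * U1 v \<mu> y"
  unfolding U1_def u_mixed_def
  by (simp add: algebra_simps sum.distrib sum_distrib_left)

lemma coupling_sum_fst:
  assumes "\<mu> \<in> couplings m"
  shows "(\<Sum>s\<in>UNIV. \<Sum>a\<in>UNIV. \<mu> (s,a) * f s) = (\<Sum>s\<in>UNIV. m s * f s)"
  using assms by (simp add: couplings_def sum_distrib_right[symmetric])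

lemma coupling_sum_snd:
  assumes "\<mu> \<in> couplings m"
  shows "(\<Sum>s\<in>UNIV. \<Sum>a\<in>UNIV. \<mu> (s,a) * f a) = (\<Sum>a\<in>UNIV. m a * f a)"
  using assms by (subst sum.swap) (simp add: couplings_def sum_distrib_right[symmetric])

lemma mu0_in_couplings:
  assumes "is_dist m"
  shows "mu0 m \<in> couplings m"
proof -
  have "(\<Sum>x\<in>UNIV. mu0 m x) = (\<Sum>s\<in>UNIV. \<Sum>t\<in>UNIV. mu0 m (s,t))"
    by (simp add: sum.cartesian_product)
  with assms show ?thesis
    by (auto simp: couplings_def is_dist_def mu0_def if_distrib sum.If_cases)
qed

lemma mismatch_mu0: "mismatch (mu0 m) y = 0"
  unfolding mismatch_def mu0_def by (auto intro!: sum.neutral)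

lemma U1_agreement_utility:
  assumes "\<mu> \<in> couplings m"
  shows "U1 (agreement_utility y) \<mu> y = (\<Sum>s\<in>UNIV. m s * (\<Sum>b\<in>UNIV. (y s b)\<^sup>2)) - mismatch \<mu> y / 2"
proof -
  define n where "n s = (\<Sum>b\<in>UNIV. (y s b)\<^sup>2)" for s
  define d where "d s a = (\<Sum>b\<in>UNIV. (y s b - y a b)\<^sup>2)" for s a
  have polarisation: "u_mixed (agreement_utility y) s (y a) = n s / 2 + n a / 2 - d s a / 2" for s a
  proof -
    have "y a b * y s b = (y s b)\<^sup>2 / 2 + (y a b)\<^sup>2 / 2 - (y s b - y a b)\<^sup>2 / 2" for b
      by (simp add: power2_diff field_simps)
    then show ?thesis
      unfolding u_mixed_def agreement_utility_def n_def d_def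
      by (simp add: sum_divide_distrib sum_subtractf sum.distrib)
  qed
  have "U1 (agreement_utility y) \<mu> y
      = (\<Sum>s\<in>UNIV. \<Sum>a\<in>UNIV. \<mu> (s,a) * (n s / 2)) + (\<Sum>s\<in>UNIV. \<Sum>a\<in>UNIV. \<mu> (s,a) * (n a / 2))
        - (\<Sum>s\<in>UNIV. \<Sum>a\<in>UNIV. \<mu> (s,a) * d s a) / 2"
    unfolding U1_def polarisation
    by (simp add: algebra_simps sum.distrib sum_subtractf sum_divide_distrib)
  also have "\<dots> = (\<Sum>s\<in>UNIV. m s * n s) - mismatch \<mu> y / 2"
    unfolding coupling_sum_fst[OF assms] coupling_sum_snd[OF assms] mismatch_def d_def
    by (simp add: sum_divide_distrib[symmetric])
  finally show ?thesis by (simp add: n_def)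
qed

lemma coupling_eq_mu0_if_off_diagonal_zero:
  assumes \<mu>: "\<mu> \<in> couplings m" and off: "\<And>s a. s \<noteq> a \<Longrightarrow> \<mu> (s,a) = 0"
  shows "\<mu> = mu0 m"
proof
  fix x :: "'a \<times> 'a"
  obtain s a where x: "x = (s,a)" by (cases x)
  have "m s = (\<Sum>t\<in>UNIV. \<mu> (s,t))"
    using \<mu> by (simp add: couplings_def)
  also have "\<dots> = (\<Sum>t\<in>UNIV. if t = s then \<mu> (s,s) else 0)"
    by (rule sum.cong) (auto simp: off)
  finally have "m s = \<mu> (s,s)"
    by simp
  then show "\<mu> x = mu0 m x"
    by (cases "s = a") (simp_all add: x off mu0_def)
qed

lemma mismatch_pos:
  assumes \<mu>: "\<mu> \<in> couplings m" and ne: "\<mu> \<noteq> mu0 m" and "inj y"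
  shows "0 < mismatch \<mu> y"
proof -
  obtain s a where "\<mu> (s,a) \<noteq> 0" "s \<noteq> a"
    using coupling_eq_mu0_if_off_diagonal_zero[OF \<mu>] ne by blast
  with \<mu> have \<mu>_pos: "0 < \<mu> (s,a)"
    by (auto simp: couplings_def is_dist_def less_le)
  from \<open>s \<noteq> a\<close> \<open>inj y\<close> obtain b where "y s b \<noteq> y a b"
    by (auto dest: injD)
  then have "0 < (\<Sum>b\<in>UNIV. (y s b - y a b)\<^sup>2)"
    by (intro sum_pos2[of UNIV b]) auto
  with \<mu>_pos have term_pos: "0 < \<mu> (s,a) * (\<Sum>b\<in>UNIV. (y s b - y a b)\<^sup>2)"
    by simp
  have nonneg: "0 \<le> \<mu> (s',a') * (\<Sum>b\<in>UNIV. (y s' b - y a' b)\<^sup>2)" for s' a'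
    using \<mu> by (auto simp: couplings_def is_dist_def intro!: mult_nonneg_nonneg sum_nonneg)
  have row_pos: "0 < (\<Sum>a'\<in>UNIV. \<mu> (s,a') * (\<Sum>b\<in>UNIV. (y s b - y a' b)\<^sup>2))"
    by (rule sum_pos2[of UNIV a]) (use term_pos nonneg in auto)
  show ?thesis
    unfolding mismatch_def
    by (rule sum_pos2[of UNIV s]) (use row_pos nonneg in \<open>auto intro: sum_nonneg\<close>)
qed

lemma U1_agreement_utility_less_mu0:
  assumes "is_dist m" "\<mu> \<in> couplings m" "\<mu> \<noteq> mu0 m" "inj y"
  shows "U1 (agreement_utility y) \<mu> y < U1 (agreement_utility y) (mu0 m) y"
  using mismatch_pos[OF assms(2-4)]
  by (simp add: U1_agreement_utility[OF assms(2)]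
      U1_agreement_utility[OF mu0_in_couplings[OF assms(1)]] mismatch_mu0)

lemma open_contains_positive_perturbation:
  fixes u v :: "'a \<Rightarrow> 'b::real_normed_vector"
  assumes "open N" "u \<in> N"
  shows "\<exists>e>0. (\<lambda>x. u x + e *\<^sub>R v x) \<in> N"
proof -
  have "continuous_on UNIV (\<lambda>e::real. \<lambda>x. u x + e *\<^sub>R v x)"
    by (intro continuous_on_coordinatewise_then_product continuous_intros)
  then have "open {e::real. (\<lambda>x. u x + e *\<^sub>R v x) \<in> N}"
    using \<open>open N\<close> by (simp add: continuous_on_open_vimage vimage_def)
  moreover have "0 \<in> {e::real. (\<lambda>x. u x + e *\<^sub>R v x) \<in> N}"
    using \<open>u \<in> N\<close> by simp
  ultimately obtain \<delta> where "\<delta> > 0" "ball 0 \<delta> \<subseteq> {e::real. (\<lambda>x. u x + e *\<^sub>R v x) \<in> N}"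
    by (meson open_contains_ball)
  moreover have "\<delta> / 2 \<in> ball 0 \<delta>"
    using \<open>\<delta> > 0\<close> by simp
  ultimately have "(\<lambda>x. u x + (\<delta> / 2) *\<^sub>R v x) \<in> N"
    by blast
  with \<open>\<delta> > 0\<close> show ?thesis
    by (intro exI[of _ "\<delta> / 2"]) simp
qed

theorem lemma13:
  fixes m :: "'s::finite \<Rightarrow> real"
    and u :: "'s \<times> 'b::finite \<Rightarrow> real"
    and y :: "'s \<Rightarrow> 'b \<Rightarrow> real"
  assumes m_dist: "is_dist m"
    and m_full: "\<forall>s. 0 < m s"
    and y_dist: "\<forall>a. is_dist (y a)"
    and y_inj: "inj y"
    and opt: "\<forall>\<mu>\<in>couplings m. U1 u (mu0 m) y \<ge> U1 u \<mu> y"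
  shows "\<forall>N. open N \<and> u \<in> N \<longrightarrow>
           (\<exists>u'\<in>N. \<forall>\<mu>\<in>couplings m. \<mu> \<noteq> mu0 m \<longrightarrow> U1 u' (mu0 m) y > U1 u' \<mu> y)"
proof (intro allI impI)
  fix N :: "('s \<times> 'b \<Rightarrow> real) set"
  assume "open N \<and> u \<in> N"
  then obtain e where e: "e > 0" "(\<lambda>x. u x + e * agreement_utility y x) \<in> N"
    using open_contains_positive_perturbation[of N u "agreement_utility y"] by auto
  show "\<exists>u'\<in>N. \<forall>\<mu>\<in>couplings m. \<mu> \<noteq> mu0 m \<longrightarrow> U1 u' (mu0 m) y > U1 u' \<mu> y"
  proof (intro bexI[OF _ e(2)] ballI impI)
    fix \<mu> assume "\<mu> \<in> couplings m" "\<mu> \<noteq> mu0 m"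
    with opt e(1) U1_agreement_utility_less_mu0[OF m_dist _ _ y_inj]
    show "U1 (\<lambda>x. u x + e * agreement_utility y x) (mu0 m) y
        > U1 (\<lambda>x. u x + e * agreement_utility y x) \<mu> y"
      unfolding U1_add_scaled by (simp add: add_le_less_mono)
  qed
qed

end
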